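(* Let $A,B$ be tridendriform algebras over a field $\mathbb{K}$, with augmentations $\overline{A}=\mathbb{K}1\oplus A$ and $\overline{B}=\mathbb{K}1\oplus B$. Let $$A\overline{\otimes}B:=(A\otimes B)\oplus(\mathbb{K}1\otimes B)\oplus(A\otimes\mathbb{K}1)\subseteq\overline{A}\otimes\overline{B}.$$ For $\ltimes\in\{\prec,\cdot,\succ\}$ define bilinear products on $A\overline{\otimes}B$ on elements $a\otimes b$, $c\otimes d$ (with $a,c\in\overline A$, $b,d\in\overline B$, each of $a\otimes b$, $c\otimes d$ lying in one of the three summands) by: - if $b=d=1$ (so that $a,c\in A$): $(a\otimes 1)\ltimes(c\otimes 1)=(a\ltimes c)\otimes 1$; - otherwise: $(a\otimes b)\ltimes(c\otimes d)=(a*c)\otimes(b\ltimes d)$, computed with the augmented conventions in $\overline{A}$ and $\overline{B}$. Then $(A\overline{\otimes}B,\prec,\cdot,\succ)$ is a tridendriform algebra.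
   Context: A tridendriform algebra over $\mathbb{K}$ is a vector space $A$ with three bilinear products $\prec,\cdot,\succ$ such that, writing $a*b=a\prec b+a\cdot b+a\succ b$, for all $a,b,c\in A$: $(a\prec b)\prec c=a\prec(b*c)$, $(a\succ b)\prec c=a\succ(b\prec c)$, $(a*b)\succ c=a\succ(b\succ c)$, $(a\succ b)\cdot c=a\succ(b\cdot c)$, $(a\prec b)\cdot c=a\cdot(b\succ c)$, $(a\cdot b)\prec c=a\cdot(b\prec c)$, $(a\cdot b)\cdot c=a\cdot(b\cdot c)$. The augmentation of a tridendriform algebra $A$ is $\overline{A}=\mathbb{K}1\oplus A$, where $1$ is a formally adjoined unit for $*$ ($1*x=x*1=x$ for all $x\in\overline A$), and for all $a\in A$: $1\prec a=0$, $a\prec 1=a$, $1\succ a=a$, $a\succ 1=0$, $1\cdot a=a\cdot 1=0$. The products $1\prec 1$, $1\cdot 1$, $1\succ 1$ are not defined. *)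

theory Defs
  imports Complex_Main "HOL-Library.Function_Algebras"
begin

definition bilinear_on ::
  "'v set \<Rightarrow> ('v \<Rightarrow> 'v \<Rightarrow> 'v) \<Rightarrow> ('k \<Rightarrow> 'v \<Rightarrow> 'v) \<Rightarrow> ('v \<Rightarrow> 'v \<Rightarrow> 'v) \<Rightarrow> bool" where
  "bilinear_on S add scale f \<longleftrightarrow>
     (\<forall>x\<in>S. \<forall>y\<in>S. f x y \<in> S) \<and>
     (\<forall>x\<in>S. \<forall>y\<in>S. \<forall>z\<in>S. f (add x y) z = add (f x z) (f y z) \<and> f x (add y z) = add (f x y) (f x z)) \<and>
     (\<forall>s. \<forall>x\<in>S. \<forall>y\<in>S. f (scale s x) y = scale s (f x y) \<and> f x (scale s y) = scale s (f x y))"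

definition tridend_axioms_on ::
  "'v set \<Rightarrow> ('v \<Rightarrow> 'v \<Rightarrow> 'v) \<Rightarrow> ('v \<Rightarrow> 'v \<Rightarrow> 'v) \<Rightarrow> ('v \<Rightarrow> 'v \<Rightarrow> 'v) \<Rightarrow> ('v \<Rightarrow> 'v \<Rightarrow> 'v) \<Rightarrow> bool" where
  "tridend_axioms_on S add prec dot succ \<longleftrightarrow>
     (let star = (\<lambda>a b. add (add (prec a b) (dot a b)) (succ a b)) in
      \<forall>a\<in>S. \<forall>b\<in>S. \<forall>c\<in>S.
        prec (prec a b) c = prec a (star b c) \<and>
        prec (succ a b) c = succ a (prec b c) \<and>
        succ (star a b) c = succ a (succ b c) \<and>
        dot (succ a b) c = succ a (dot b c) \<and>
        dot (prec a b) c = dot a (succ b c) \<and>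
        prec (dot a b) c = dot a (prec b c) \<and>
        dot (dot a b) c = dot a (dot b c))"

definition tridendriform_on ::
  "'v set \<Rightarrow> ('v \<Rightarrow> 'v \<Rightarrow> 'v) \<Rightarrow> ('k \<Rightarrow> 'v \<Rightarrow> 'v) \<Rightarrow>
   ('v \<Rightarrow> 'v \<Rightarrow> 'v) \<Rightarrow> ('v \<Rightarrow> 'v \<Rightarrow> 'v) \<Rightarrow> ('v \<Rightarrow> 'v \<Rightarrow> 'v) \<Rightarrow> bool" where
  "tridendriform_on S add scale prec dot succ \<longleftrightarrow>
     bilinear_on S add scale prec \<and> bilinear_on S add scale dot \<and> bilinear_on S add scale succ \<and>
     tridend_axioms_on S add prec dot succ"

section \<open>Augmentation  K1 \<oplus> A, represented as pairs (lambda, a)\<close>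

definition aug_add :: "'k::field \<times> 'a::ab_group_add \<Rightarrow> 'k \<times> 'a \<Rightarrow> 'k \<times> 'a" where
  "aug_add u v = (fst u + fst v, snd u + snd v)"

definition aug_scale :: "('k::field \<Rightarrow> 'a::ab_group_add \<Rightarrow> 'a) \<Rightarrow> 'k \<Rightarrow> 'k \<times> 'a \<Rightarrow> 'k \<times> 'a" where
  "aug_scale scale s u = (s * fst u, scale s (snd u))"

text \<open>Elements of {1} \<union> A are encoded as 'a option: None is the unit 1, Some a is a \<in> A.\<close>
definition aug_emb :: "'a::ab_group_add option \<Rightarrow> 'k::field \<times> 'a" where
  "aug_emb x = (case x of None \<Rightarrow> (1, 0) | Some a \<Rightarrow> (0, a))"

text \<open>The augmented associative product * (1 is a unit) on {1} \<union> A, with values in K1 \<oplus> A.\<close>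
definition aug_star ::
  "('a \<Rightarrow> 'a \<Rightarrow> 'a) \<Rightarrow> ('a \<Rightarrow> 'a \<Rightarrow> 'a) \<Rightarrow> ('a \<Rightarrow> 'a \<Rightarrow> 'a) \<Rightarrow>
   'a::ab_group_add option \<Rightarrow> 'a option \<Rightarrow> 'k::field \<times> 'a" where
  "aug_star prec dot succ x y = (case (x, y) of
      (None, None) \<Rightarrow> (1, 0)
    | (None, Some c) \<Rightarrow> (0, c)
    | (Some a, None) \<Rightarrow> (0, a)
    | (Some a, Some c) \<Rightarrow> (0, prec a c + dot a c + succ a c))"

text \<open>Augmented products; the values at (1,1) are not defined (undefined, never used).\<close>
definition aug_prec :: "('a \<Rightarrow> 'a \<Rightarrow> 'a) \<Rightarrow> 'a::ab_group_add option \<Rightarrow> 'a option \<Rightarrow> 'k::field \<times> 'a" where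
  "aug_prec prec x y = (case (x, y) of
      (None, None) \<Rightarrow> undefined
    | (None, Some c) \<Rightarrow> (0, 0)
    | (Some a, None) \<Rightarrow> (0, a)
    | (Some a, Some c) \<Rightarrow> (0, prec a c))"

definition aug_dot :: "('a \<Rightarrow> 'a \<Rightarrow> 'a) \<Rightarrow> 'a::ab_group_add option \<Rightarrow> 'a option \<Rightarrow> 'k::field \<times> 'a" where
  "aug_dot dot x y = (case (x, y) of
      (None, None) \<Rightarrow> undefined
    | (None, Some c) \<Rightarrow> (0, 0)
    | (Some a, None) \<Rightarrow> (0, 0)
    | (Some a, Some c) \<Rightarrow> (0, dot a c))"

definition aug_succ :: "('a \<Rightarrow> 'a \<Rightarrow> 'a) \<Rightarrow> 'a::ab_group_add option \<Rightarrow> 'a option \<Rightarrow> 'k::field \<times> 'a" where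
  "aug_succ succ x y = (case (x, y) of
      (None, None) \<Rightarrow> undefined
    | (None, Some c) \<Rightarrow> (0, c)
    | (Some a, None) \<Rightarrow> (0, 0)
    | (Some a, Some c) \<Rightarrow> (0, succ a c))"

section \<open>Tensor product of vector spaces U, V over a field: free vector space on U \<times> V
  (finitely supported functions U \<times> V \<Rightarrow> K) modulo the bilinearity relations; elements are cosets.\<close>

definition fscale :: "'k::field \<Rightarrow> ('x \<Rightarrow> 'k) \<Rightarrow> ('x \<Rightarrow> 'k)" where
  "fscale s f = (\<lambda>x. s * f x)"

definition delta :: "'x \<Rightarrow> ('x \<Rightarrow> 'k::field)" where
  "delta x = (\<lambda>y. if y = x then 1 else 0)"

definition tensor_rels ::
  "('u \<Rightarrow> 'u \<Rightarrow> 'u) \<Rightarrow> ('k::field \<Rightarrow> 'u \<Rightarrow> 'u) \<Rightarrow> ('v \<Rightarrow> 'v \<Rightarrow> 'v) \<Rightarrow> ('k \<Rightarrow> 'v \<Rightarrow> 'v) \<Rightarrow>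
   ('u \<times> 'v \<Rightarrow> 'k) set" where
  "tensor_rels addU scU addV scV =
     {delta (addU u u', v) - delta (u, v) - delta (u', v) | u u' v. True} \<union>
     {delta (u, addV v v') - delta (u, v) - delta (u, v') | u v v'. True} \<union>
     {delta (scU s u, v) - fscale s (delta (u, v)) | s u v. True} \<union>
     {delta (u, scV s v) - fscale s (delta (u, v)) | s u v. True}"

definition tensor_null ::
  "('u \<Rightarrow> 'u \<Rightarrow> 'u) \<Rightarrow> ('k::field \<Rightarrow> 'u \<Rightarrow> 'u) \<Rightarrow> ('v \<Rightarrow> 'v \<Rightarrow> 'v) \<Rightarrow> ('k \<Rightarrow> 'v \<Rightarrow> 'v) \<Rightarrow>
   ('u \<times> 'v \<Rightarrow> 'k) set" where
  "tensor_null addU scU addV scV = module.span fscale (tensor_rels addU scU addV scV)"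

definition coset :: "('x \<Rightarrow> 'k::field) set \<Rightarrow> ('x \<Rightarrow> 'k) \<Rightarrow> ('x \<Rightarrow> 'k) set" where
  "coset N f = {f + n | n. n \<in> N}"

definition coset_add :: "('x \<Rightarrow> 'k::field) set \<Rightarrow> ('x \<Rightarrow> 'k) set \<Rightarrow> ('x \<Rightarrow> 'k) set" where
  "coset_add X Y = {x + y | x y. x \<in> X \<and> y \<in> Y}"

definition coset_scale :: "('x \<Rightarrow> 'k::field) set \<Rightarrow> 'k \<Rightarrow> ('x \<Rightarrow> 'k) set \<Rightarrow> ('x \<Rightarrow> 'k) set" where
  "coset_scale N s X = {fscale s x + n | x n. x \<in> X \<and> n \<in> N}"

definition augT_null ::
  "('k::field \<Rightarrow> 'a::ab_group_add \<Rightarrow> 'a) \<Rightarrow> ('k \<Rightarrow> 'b::ab_group_add \<Rightarrow> 'b) \<Rightarrow>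
   (('k \<times> 'a) \<times> ('k \<times> 'b) \<Rightarrow> 'k) set" where
  "augT_null scA scB = tensor_null aug_add (aug_scale scA) aug_add (aug_scale scB)"

definition augT_tensor ::
  "('k::field \<Rightarrow> 'a::ab_group_add \<Rightarrow> 'a) \<Rightarrow> ('k \<Rightarrow> 'b::ab_group_add \<Rightarrow> 'b) \<Rightarrow>
   'k \<times> 'a \<Rightarrow> 'k \<times> 'b \<Rightarrow> (('k \<times> 'a) \<times> ('k \<times> 'b) \<Rightarrow> 'k) set" where
  "augT_tensor scA scB u v = coset (augT_null scA scB) (delta (u, v))"

text \<open>A \<otimes>bar B = (A \<otimes> B) \<oplus> (K1 \<otimes> B) \<oplus> (A \<otimes> K1): the subspace spanned by the pure tensors
  x \<otimes> y with x \<in> {1} \<union> A, y \<in> {1} \<union> B, not both equal to 1.\<close>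
definition tensor_bar ::
  "('k::field \<Rightarrow> 'a::ab_group_add \<Rightarrow> 'a) \<Rightarrow> ('k \<Rightarrow> 'b::ab_group_add \<Rightarrow> 'b) \<Rightarrow>
   (('k \<times> 'a) \<times> ('k \<times> 'b) \<Rightarrow> 'k) set set" where
  "tensor_bar scA scB =
     coset (augT_null scA scB) `
       module.span fscale {delta (aug_emb x, aug_emb y) | x y. \<not> (x = None \<and> y = None)}"

text \<open>Here opA is the product on A and augopB the augmented product on {1} \<union> B.\<close>
definition tensor_bar_rule ::
  "('k::field \<Rightarrow> 'a::ab_group_add \<Rightarrow> 'a) \<Rightarrow> ('k \<Rightarrow> 'b::ab_group_add \<Rightarrow> 'b) \<Rightarrow>
   ('a \<Rightarrow> 'a \<Rightarrow> 'a) \<Rightarrow> ('a \<Rightarrow> 'a \<Rightarrow> 'a) \<Rightarrow> ('a \<Rightarrow> 'a \<Rightarrow> 'a) \<Rightarrow>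
   ('a \<Rightarrow> 'a \<Rightarrow> 'a) \<Rightarrow> ('b option \<Rightarrow> 'b option \<Rightarrow> 'k \<times> 'b) \<Rightarrow>
   ((('k \<times> 'a) \<times> ('k \<times> 'b) \<Rightarrow> 'k) set \<Rightarrow> (('k \<times> 'a) \<times> ('k \<times> 'b) \<Rightarrow> 'k) set \<Rightarrow>
    (('k \<times> 'a) \<times> ('k \<times> 'b) \<Rightarrow> 'k) set) \<Rightarrow> bool" where
  "tensor_bar_rule scA scB precA dotA succA opA augopB p \<longleftrightarrow>
     (\<forall>x y x' y'. \<not> (x = None \<and> y = None) \<longrightarrow> \<not> (x' = None \<and> y' = None) \<longrightarrow>
        p (augT_tensor scA scB (aug_emb x) (aug_emb y)) (augT_tensor scA scB (aug_emb x') (aug_emb y')) =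
          (if y = None \<and> y' = None
           then augT_tensor scA scB (0, opA (the x) (the x')) (1, 0)
           else augT_tensor scA scB (aug_star precA dotA succA x x') (augopB y y')))"

end

theory Submission
  imports Defs
begin

(*
  Existence: the product of two pure tensors is given by a formula that is bilinear modulo the
  tensor relations, so its bilinear extension to the free vector space descends to the quotient.
  On generators it is the defining rule, and it maps pairs of generators to generators, so it
  preserves A \<otimes>bar B.

  Axioms: by the defining rule, any such products map pairs of generators to generators.  Each
  axiom is a trilinear identity, so it only has to be checked on triples of generators; there it
  is an identity between the encodings of generators as pairs of options, up to generators with a
  zero factor, and it follows by case analysis from the axioms of A and B and the associativity
  of *.
*)

section \<open>Free vector spaces and linear extension\<close>

interpretation free: module "fscale :: 'k::field \<Rightarrow> ('x \<Rightarrow> 'k) \<Rightarrow> 'x \<Rightarrow> 'k"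
  by standard (auto simp: fscale_def fun_eq_iff algebra_simps)

lemma fscale_apply: "fscale s f x = s * f x"
  by (simp add: fscale_def)

definition finite_support :: "('x \<Rightarrow> 'k::field) \<Rightarrow> bool" where
  "finite_support f \<longleftrightarrow> finite {x. f x \<noteq> 0}"

lemma finite_support_0 [simp]: "finite_support 0"
  by (simp add: finite_support_def)

lemma finite_support_add: "finite_support f \<Longrightarrow> finite_support g \<Longrightarrow> finite_support (f + g)"
  unfolding finite_support_def
  by (rule finite_subset[of _ "{x. f x \<noteq> 0} \<union> {x. g x \<noteq> 0}"]) auto

lemma finite_support_diff: "finite_support f \<Longrightarrow> finite_support g \<Longrightarrow> finite_support (f - g)"
  unfolding finite_support_def
  by (rule finite_subset[of _ "{x. f x \<noteq> 0} \<union> {x. g x \<noteq> 0}"]) auto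

lemma finite_support_fscale: "finite_support f \<Longrightarrow> finite_support (fscale s f)"
  unfolding finite_support_def by (rule finite_subset[of _ "{x. f x \<noteq> 0}"]) (auto simp: fscale_apply)

lemma finite_support_delta [simp]: "finite_support (delta x)"
  unfolding finite_support_def delta_def by (rule finite_subset[of _ "{x}"]) auto

lemma finite_support_span:
  assumes "\<And>r. r \<in> R \<Longrightarrow> finite_support r" and "f \<in> free.span R"
  shows "finite_support f"
  using assms(2)
proof (induction f rule: free.span_induct_alt)
  case (step c x y)
  then show ?case
    using assms(1) by (metis finite_support_add finite_support_fscale)
qed (simp add: finite_support_def)

text \<open>Only meaningful for finitely supported \<open>f\<close>: over an infinite support the sum is 0.\<close>

definition lin_ext :: "('x \<Rightarrow> 'y \<Rightarrow> 'k::field) \<Rightarrow> ('x \<Rightarrow> 'k) \<Rightarrow> 'y \<Rightarrow> 'k" where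
  "lin_ext \<phi> f = (\<Sum>x | f x \<noteq> 0. fscale (f x) (\<phi> x))"

lemma lin_ext_eq_sum:
  assumes "finite S" and "{x. f x \<noteq> 0} \<subseteq> S"
  shows "lin_ext \<phi> f = (\<Sum>x\<in>S. fscale (f x) (\<phi> x))"
  unfolding lin_ext_def
  by (rule sum.mono_neutral_left) (use assms in \<open>auto simp: fscale_def fun_eq_iff\<close>)

lemma lin_ext_0 [simp]: "lin_ext \<phi> 0 = 0"
  by (simp add: lin_ext_def)

lemma lin_ext_delta [simp]: "lin_ext \<phi> (delta x) = \<phi> x"
  using lin_ext_eq_sum[of "{x}" "delta x" \<phi>] by (simp add: delta_def)

lemma lin_ext_add:
  assumes "finite_support f" and "finite_support g"
  shows "lin_ext \<phi> (f + g) = lin_ext \<phi> f + lin_ext \<phi> g"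
proof -
  let ?S = "{x. f x \<noteq> 0} \<union> {x. g x \<noteq> 0}"
  have S: "finite ?S"
    using assms by (simp add: finite_support_def)
  have "lin_ext \<phi> (f + g) = (\<Sum>x\<in>?S. fscale (f x) (\<phi> x) + fscale (g x) (\<phi> x))"
    by (subst lin_ext_eq_sum[OF S]) (auto simp: free.scale_left_distrib)
  also have "\<dots> = lin_ext \<phi> f + lin_ext \<phi> g"
    by (simp add: sum.distrib lin_ext_eq_sum[OF S])
  finally show ?thesis .
qed

lemma lin_ext_diff:
  assumes "finite_support f" and "finite_support g"
  shows "lin_ext \<phi> (f - g) = lin_ext \<phi> f - lin_ext \<phi> g"
  using lin_ext_add[of "f - g" g \<phi>] assms by (simp add: finite_support_diff)

lemma lin_ext_fscale:
  assumes "finite_support f"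
  shows "lin_ext \<phi> (fscale s f) = fscale s (lin_ext \<phi> f)"
proof -
  have S: "finite {x. f x \<noteq> 0}"
    using assms by (simp add: finite_support_def)
  have "lin_ext \<phi> (fscale s f) = (\<Sum>x | f x \<noteq> 0. fscale (s * f x) (\<phi> x))"
    by (subst lin_ext_eq_sum[OF S]) (auto simp: fscale_apply)
  then show ?thesis
    by (simp add: lin_ext_def free.scale_sum_right)
qed

lemma lin_ext_in_subspace:
  "free.subspace M \<Longrightarrow> (\<And>x. \<phi> x \<in> M) \<Longrightarrow> lin_ext \<phi> f \<in> M"
  unfolding lin_ext_def by (intro free.subspace_sum free.subspace_scale)

lemma subspace_lin_ext_preimage:
  assumes "free.subspace M"
  shows "free.subspace {f. finite_support f \<and> lin_ext \<phi> f \<in> M}"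
  using assms
  by (auto simp: free.subspace_def finite_support_add finite_support_fscale lin_ext_add lin_ext_fscale)

lemma lin_ext_span_mem:
  assumes "free.subspace M"
    and "\<And>r. r \<in> R \<Longrightarrow> finite_support r \<and> lin_ext \<phi> r \<in> M"
    and "f \<in> free.span R"
  shows "lin_ext \<phi> f \<in> M"
  using free.span_minimal[OF _ subspace_lin_ext_preimage[OF assms(1)]] assms(2,3) by blast

definition bilin_ext :: "('x \<Rightarrow> 'y \<Rightarrow> 'z \<Rightarrow> 'k::field) \<Rightarrow> ('x \<Rightarrow> 'k) \<Rightarrow> ('y \<Rightarrow> 'k) \<Rightarrow> 'z \<Rightarrow> 'k" where
  "bilin_ext \<psi> f g = lin_ext (\<lambda>x. lin_ext (\<psi> x) g) f"

lemma bilin_ext_delta [simp]: "bilin_ext \<psi> (delta x) (delta y) = \<psi> x y"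
  by (simp add: bilin_ext_def)

lemma bilin_ext_swap:
  assumes "finite_support f" and "finite_support g"
  shows "bilin_ext \<psi> f g = lin_ext (\<lambda>y. lin_ext (\<lambda>x. \<psi> x y) f) g"
proof -
  have "finite {x. f x \<noteq> 0}" "finite {y. g y \<noteq> 0}"
    using assms by (simp_all add: finite_support_def)
  then show ?thesis
    unfolding bilin_ext_def lin_ext_def
    by (simp add: free.scale_sum_right sum.swap[of _ "{x. f x \<noteq> 0}"] mult.commute mult.left_commute)
qed

lemma bilin_ext_add_left:
  "finite_support f \<Longrightarrow> finite_support f' \<Longrightarrow> bilin_ext \<psi> (f + f') g = bilin_ext \<psi> f g + bilin_ext \<psi> f' g"
  and bilin_ext_diff_left:
  "finite_support f \<Longrightarrow> finite_support f' \<Longrightarrow> bilin_ext \<psi> (f - f') g = bilin_ext \<psi> f g - bilin_ext \<psi> f' g"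
  and bilin_ext_fscale_left:
  "finite_support f \<Longrightarrow> bilin_ext \<psi> (fscale s f) g = fscale s (bilin_ext \<psi> f g)"
  unfolding bilin_ext_def by (rule lin_ext_add lin_ext_diff lin_ext_fscale; assumption)+

lemma bilin_ext_add_right:
  "finite_support f \<Longrightarrow> finite_support g \<Longrightarrow> finite_support g' \<Longrightarrow>
    bilin_ext \<psi> f (g + g') = bilin_ext \<psi> f g + bilin_ext \<psi> f g'"
  and bilin_ext_diff_right:
  "finite_support f \<Longrightarrow> finite_support g \<Longrightarrow> finite_support g' \<Longrightarrow>
    bilin_ext \<psi> f (g - g') = bilin_ext \<psi> f g - bilin_ext \<psi> f g'"
  and bilin_ext_fscale_right:
  "finite_support f \<Longrightarrow> finite_support g \<Longrightarrow> bilin_ext \<psi> f (fscale s g) = fscale s (bilin_ext \<psi> f g)"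
  by (simp_all add: bilin_ext_swap finite_support_add finite_support_diff finite_support_fscale
      lin_ext_add lin_ext_diff lin_ext_fscale)

section \<open>Quotients by a subspace\<close>

context
  fixes N :: "('x \<Rightarrow> 'k::field) set"
  assumes subspace_N: "free.subspace N"
begin

lemma coset_eq_iff: "coset N f = coset N g \<longleftrightarrow> f - g \<in> N"
proof
  assume "coset N f = coset N g"
  moreover have "f \<in> coset N f"
    unfolding coset_def using free.subspace_0[OF subspace_N] by force
  ultimately obtain n where "f = g + n" "n \<in> N"
    unfolding coset_def by blast
  then show "f - g \<in> N"
    by simp
next
  assume fg: "f - g \<in> N"
  have "f + n = g + ((f - g) + n)" "g + n = f + (n - (f - g))" for n
    by simp_all
  with fg show "coset N f = coset N g"
    unfolding coset_def using free.subspace_add free.subspace_diff subspace_N by metis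
qed

lemma coset_add_coset: "coset_add (coset N f) (coset N g) = coset N (f + g)"
proof (intro set_eqI iffI)
  fix x
  assume "x \<in> coset_add (coset N f) (coset N g)"
  then obtain n m where "x = (f + g) + (n + m)" "n \<in> N" "m \<in> N"
    by (auto simp: coset_add_def coset_def algebra_simps)
  then show "x \<in> coset N (f + g)"
    unfolding coset_def using free.subspace_add[OF subspace_N] by blast
next
  fix x
  assume "x \<in> coset N (f + g)"
  then obtain n where "x = (f + n) + (g + 0)" "n \<in> N"
    by (auto simp: coset_def algebra_simps)
  then show "x \<in> coset_add (coset N f) (coset N g)"
    unfolding coset_add_def coset_def using free.subspace_0[OF subspace_N] by blast
qed

lemma coset_scale_coset: "coset_scale N s (coset N f) = coset N (fscale s f)"
proof (intro set_eqI iffI)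
  fix x
  assume "x \<in> coset_scale N s (coset N f)"
  then obtain n m where "x = fscale s f + (fscale s n + m)" "n \<in> N" "m \<in> N"
    by (auto simp: coset_scale_def coset_def free.scale_right_distrib algebra_simps)
  then show "x \<in> coset N (fscale s f)"
    unfolding coset_def using free.subspace_add free.subspace_scale subspace_N by blast
next
  fix x
  assume "x \<in> coset N (fscale s f)"
  then obtain n where "x = fscale s (f + 0) + n" "n \<in> N"
    by (auto simp: coset_def)
  then show "x \<in> coset_scale N s (coset N f)"
    unfolding coset_scale_def coset_def using free.subspace_0[OF subspace_N] by blast
qed

end

lemma coset_add_commute: "coset_add X Y = coset_add Y X"
  unfolding coset_add_def by (auto simp: add.commute) (metis add.commute)+

lemma coset_add_assoc: "coset_add (coset_add X Y) Z = coset_add X (coset_add Y Z)"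
  unfolding coset_add_def by (auto simp: add.assoc) (metis add.assoc)+

lemma coset_add_left_commute: "coset_add X (coset_add Y Z) = coset_add Y (coset_add X Z)"
  by (metis coset_add_assoc coset_add_commute)

definition linear_on :: "'v set \<Rightarrow> ('v \<Rightarrow> 'v \<Rightarrow> 'v) \<Rightarrow> ('k \<Rightarrow> 'v \<Rightarrow> 'v) \<Rightarrow> ('v \<Rightarrow> 'v) \<Rightarrow> bool" where
  "linear_on S add scale f \<longleftrightarrow>
     (\<forall>x\<in>S. f x \<in> S) \<and>
     (\<forall>x\<in>S. \<forall>y\<in>S. f (add x y) = add (f x) (f y)) \<and>
     (\<forall>s. \<forall>x\<in>S. f (scale s x) = scale s (f x))"

lemma linear_on_comp:
  "linear_on S add scale f \<Longrightarrow> linear_on S add scale g \<Longrightarrow> linear_on S add scale (\<lambda>x. f (g x))"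
  unfolding linear_on_def by auto

lemma bilinear_on_closed: "bilinear_on S add scale f \<Longrightarrow> x \<in> S \<Longrightarrow> y \<in> S \<Longrightarrow> f x y \<in> S"
  unfolding bilinear_on_def by blast

lemma bilinear_on_linear_on_left:
  "bilinear_on S add scale f \<Longrightarrow> y \<in> S \<Longrightarrow> linear_on S add scale (\<lambda>x. f x y)"
  and bilinear_on_linear_on_right:
  "bilinear_on S add scale f \<Longrightarrow> x \<in> S \<Longrightarrow> linear_on S add scale (f x)"
  unfolding bilinear_on_def linear_on_def by auto

locale free_quotient =
  fixes N G :: "('x \<Rightarrow> 'k::field) set"
  assumes subspace_N: "free.subspace N"
    and finite_support_N: "n \<in> N \<Longrightarrow> finite_support n"
    and finite_support_G: "b \<in> G \<Longrightarrow> finite_support b"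
begin

abbreviation quot :: "('x \<Rightarrow> 'k) set set" where
  "quot \<equiv> coset N ` free.span G"

lemmas coset_eq_iff = coset_eq_iff[OF subspace_N]
  and coset_add_coset = coset_add_coset[OF subspace_N]
  and coset_scale_coset = coset_scale_coset[OF subspace_N]

lemma finite_support_span_G: "f \<in> free.span G \<Longrightarrow> finite_support f"
  by (rule finite_support_span[OF finite_support_G])

lemma coset_add_in_quot: "X \<in> quot \<Longrightarrow> Y \<in> quot \<Longrightarrow> coset_add X Y \<in> quot"
  by (auto simp: coset_add_coset intro: free.span_add)

lemma coset_scale_coset_add:
  "X \<in> quot \<Longrightarrow> Y \<in> quot \<Longrightarrow>
    coset_scale N s (coset_add X Y) = coset_add (coset_scale N s X) (coset_scale N s Y)"
  by (auto simp: coset_add_coset coset_scale_coset free.scale_right_distrib)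

lemma linear_on_quot_coset_0:
  assumes "linear_on quot coset_add (coset_scale N) H"
  shows "H (coset N 0) = coset N 0"
proof -
  have "coset N 0 \<in> quot"
    using free.span_zero by blast
  then have "H (coset N 0) = coset_scale N 0 (H (coset N 0))" and "H (coset N 0) \<in> quot"
    using assms free.scale_zero_left[of 0] coset_scale_coset[of 0 0]
    unfolding linear_on_def by metis+
  then show ?thesis
    by (auto simp: coset_scale_coset)
qed

lemma linear_on_quot_eqI:
  assumes H: "linear_on quot coset_add (coset_scale N) H"
    and H': "linear_on quot coset_add (coset_scale N) H'"
    and gen: "\<And>b. b \<in> G \<Longrightarrow> H (coset N b) = H' (coset N b)"
    and X: "X \<in> quot"
  shows "H X = H' X"
proof -
  let ?E = "{f. f \<in> free.span G \<and> H (coset N f) = H' (coset N f)}"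
  have "free.subspace ?E"
    unfolding free.subspace_def
  proof (intro conjI ballI allI)
    show "0 \<in> ?E"
      using linear_on_quot_coset_0[OF H] linear_on_quot_coset_0[OF H'] free.span_zero by simp
    show "f + g \<in> ?E" if "f \<in> ?E" "g \<in> ?E" for f g
    proof -
      have "coset N f \<in> quot" "coset N g \<in> quot"
        using that by auto
      with that H H' have "H (coset N (f + g)) = H' (coset N (f + g))"
        unfolding linear_on_def coset_add_coset[symmetric] by simp
      with that show ?thesis
        by (simp add: free.span_add)
    qed
    show "fscale s f \<in> ?E" if "f \<in> ?E" for s f
    proof -
      have "coset N f \<in> quot"
        using that by auto
      with that H H' have "H (coset N (fscale s f)) = H' (coset N (fscale s f))"
        unfolding linear_on_def coset_scale_coset[symmetric] by simp
      with that show ?thesis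
        by (simp add: free.span_scale)
    qed
  qed
  moreover have "G \<subseteq> ?E"
    using gen free.span_base by blast
  ultimately have "free.span G \<subseteq> ?E"
    by (intro free.span_minimal)
  with X show ?thesis
    by blast
qed

lemma trilinear_quot_eqI:
  assumes q: "bilinear_on quot coset_add (coset_scale N) q"
    and r: "bilinear_on quot coset_add (coset_scale N) r"
    and q': "bilinear_on quot coset_add (coset_scale N) q'"
    and r': "bilinear_on quot coset_add (coset_scale N) r'"
    and gen: "\<And>b1 b2 b3. b1 \<in> G \<Longrightarrow> b2 \<in> G \<Longrightarrow> b3 \<in> G \<Longrightarrow>
       q (r (coset N b1) (coset N b2)) (coset N b3) = q' (coset N b1) (r' (coset N b2) (coset N b3))"
    and X: "X \<in> quot" and Y: "Y \<in> quot" and Z: "Z \<in> quot"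
  shows "q (r X Y) Z = q' X (r' Y Z)"
proof -
  note left = bilinear_on_linear_on_left and right = bilinear_on_linear_on_right
  have G_quot: "coset N b \<in> quot" if "b \<in> G" for b
    using that free.span_base by blast
  have gen1: "q (r X (coset N b2)) (coset N b3) = q' X (r' (coset N b2) (coset N b3))"
    if X: "X \<in> quot" and b2: "b2 \<in> G" and b3: "b3 \<in> G" for X b2 b3
    by (rule linear_on_quot_eqI[OF linear_on_comp[OF left[OF q G_quot[OF b3]] left[OF r G_quot[OF b2]]]
          left[OF q' bilinear_on_closed[OF r' G_quot[OF b2] G_quot[OF b3]]] gen[OF _ b2 b3] X])
  have gen2: "q (r X Y) (coset N b3) = q' X (r' Y (coset N b3))"
    if X: "X \<in> quot" and Y: "Y \<in> quot" and b3: "b3 \<in> G" for X Y b3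
    by (rule linear_on_quot_eqI[OF linear_on_comp[OF left[OF q G_quot[OF b3]] right[OF r X]]
          linear_on_comp[OF right[OF q' X] left[OF r' G_quot[OF b3]]] gen1[OF X _ b3] Y])
  show ?thesis
    by (rule linear_on_quot_eqI[OF right[OF q bilinear_on_closed[OF r X Y]]
          linear_on_comp[OF right[OF q' X] right[OF r' Y]] gen2[OF X Y] Z])
qed

lemma subspace_span_G_plus_N: "free.subspace {x. \<exists>h\<in>free.span G. x - h \<in> N}"
  unfolding free.subspace_def
proof (intro conjI ballI allI)
  show "0 \<in> {x. \<exists>h\<in>free.span G. x - h \<in> N}"
    using free.span_zero free.subspace_0[OF subspace_N] by force
next
  fix x y
  assume "x \<in> {x. \<exists>h\<in>free.span G. x - h \<in> N}" "y \<in> {x. \<exists>h\<in>free.span G. x - h \<in> N}"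
  then obtain h h' where "h \<in> free.span G" "h' \<in> free.span G" "x - h \<in> N" "y - h' \<in> N"
    by blast
  moreover have "x + y - (h + h') = (x - h) + (y - h')"
    by simp
  ultimately show "x + y \<in> {x. \<exists>h\<in>free.span G. x - h \<in> N}"
    using free.span_add free.subspace_add[OF subspace_N] by (metis (mono_tags, lifting) mem_Collect_eq)
next
  fix c x
  assume "x \<in> {x. \<exists>h\<in>free.span G. x - h \<in> N}"
  then obtain h where "h \<in> free.span G" "x - h \<in> N"
    by blast
  then show "fscale c x \<in> {x. \<exists>h\<in>free.span G. x - h \<in> N}"
    using free.span_scale free.subspace_scale[OF subspace_N] free.scale_right_diff_distrib
    by (metis (mono_tags, lifting) mem_Collect_eq)
qed

lemma bilin_ext_span_G_closed:
  assumes closed: "\<And>b b'. b \<in> G \<Longrightarrow> b' \<in> G \<Longrightarrow> \<exists>h\<in>free.span G. bilin_ext \<psi> b b' - h \<in> N"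
    and f: "f \<in> free.span G" and g: "g \<in> free.span G"
  shows "\<exists>h\<in>free.span G. bilin_ext \<psi> f g - h \<in> N"
proof -
  let ?M = "{x. \<exists>h\<in>free.span G. x - h \<in> N}"
  have "bilin_ext \<psi> b g \<in> ?M" if b: "b \<in> G" for b
  proof -
    have "lin_ext (\<lambda>y. lin_ext (\<lambda>x. \<psi> x y) b) b' \<in> ?M" if b': "b' \<in> G" for b'
      using closed[OF b b'] by (simp add: bilin_ext_swap finite_support_G b b')
    then have "lin_ext (\<lambda>y. lin_ext (\<lambda>x. \<psi> x y) b) g \<in> ?M"
      using finite_support_G by (intro lin_ext_span_mem[OF subspace_span_G_plus_N _ g]) auto
    then show ?thesis
      by (simp add: bilin_ext_swap finite_support_G[OF b] finite_support_span_G[OF g])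
  qed
  then have "lin_ext (\<lambda>x. lin_ext (\<psi> x) g) f \<in> ?M"
    using finite_support_G by (intro lin_ext_span_mem[OF subspace_span_G_plus_N _ f]) (auto simp: bilin_ext_def)
  then show ?thesis
    by (simp add: bilin_ext_def)
qed

definition quot_rep :: "('x \<Rightarrow> 'k) set \<Rightarrow> 'x \<Rightarrow> 'k" where
  "quot_rep X = (SOME f. f \<in> free.span G \<and> X = coset N f)"

lemma quot_rep_coset:
  assumes "f \<in> free.span G"
  shows "quot_rep (coset N f) \<in> free.span G" and "coset N (quot_rep (coset N f)) = coset N f"
proof -
  have "quot_rep (coset N f) \<in> free.span G \<and> coset N f = coset N (quot_rep (coset N f))"
    unfolding quot_rep_def by (rule someI_ex[of "\<lambda>g. g \<in> free.span G \<and> coset N f = coset N g"])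
      (use assms in blast)
  then show "quot_rep (coset N f) \<in> free.span G" and "coset N (quot_rep (coset N f)) = coset N f"
    by simp_all
qed

lemma bilinear_on_quot_sum3:
  assumes "bilinear_on quot coset_add (coset_scale N) p"
    and "bilinear_on quot coset_add (coset_scale N) d"
    and "bilinear_on quot coset_add (coset_scale N) s"
  shows "bilinear_on quot coset_add (coset_scale N) (\<lambda>X Y. coset_add (coset_add (p X Y) (d X Y)) (s X Y))"
  using assms unfolding bilinear_on_def
  by (auto simp: coset_add_in_quot coset_scale_coset_add coset_add_assoc coset_add_left_commute)

end

locale quot_bilinear = free_quotient N G for N G :: "('x \<Rightarrow> 'k::field) set" +
  fixes \<psi> :: "'x \<Rightarrow> 'x \<Rightarrow> 'x \<Rightarrow> 'k"
  assumes N_left: "f \<in> N \<Longrightarrow> finite_support g \<Longrightarrow> bilin_ext \<psi> f g \<in> N"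
    and N_right: "finite_support f \<Longrightarrow> g \<in> N \<Longrightarrow> bilin_ext \<psi> f g \<in> N"
begin

definition quot_prod :: "('x \<Rightarrow> 'k) set \<Rightarrow> ('x \<Rightarrow> 'k) set \<Rightarrow> ('x \<Rightarrow> 'k) set" where
  "quot_prod X Y = coset N (bilin_ext \<psi> (quot_rep X) (quot_rep Y))"

lemma bilin_ext_coset_eq:
  assumes fin: "finite_support f" "finite_support f'" "finite_support g" "finite_support g'"
    and "coset N f = coset N f'" and "coset N g = coset N g'"
  shows "coset N (bilin_ext \<psi> f g) = coset N (bilin_ext \<psi> f' g')"
proof -
  have "f - f' \<in> N" "g - g' \<in> N"
    using assms(5,6) by (simp_all add: coset_eq_iff)
  then have "bilin_ext \<psi> (f - f') g + bilin_ext \<psi> f' (g - g') \<in> N"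
    using fin by (intro free.subspace_add[OF subspace_N] N_left N_right)
  moreover have "bilin_ext \<psi> (f - f') g + bilin_ext \<psi> f' (g - g') = bilin_ext \<psi> f g - bilin_ext \<psi> f' g'"
    using fin by (simp add: bilin_ext_diff_left bilin_ext_diff_right)
  ultimately show ?thesis
    by (simp add: coset_eq_iff)
qed

lemma quot_prod_coset:
  assumes "f \<in> free.span G" and "g \<in> free.span G"
  shows "quot_prod (coset N f) (coset N g) = coset N (bilin_ext \<psi> f g)"
  unfolding quot_prod_def using assms
  by (intro bilin_ext_coset_eq) (simp_all add: quot_rep_coset finite_support_span_G)

lemma bilinear_on_quot_prod:
  assumes closed: "\<And>b b'. b \<in> G \<Longrightarrow> b' \<in> G \<Longrightarrow> \<exists>h\<in>free.span G. bilin_ext \<psi> b b' - h \<in> N"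
  shows "bilinear_on quot coset_add (coset_scale N) quot_prod"
  unfolding bilinear_on_def ball_simps(9)
proof (intro conjI ballI allI)
  fix f g
  assume f: "f \<in> free.span G" and g: "g \<in> free.span G"
  then obtain h where h: "h \<in> free.span G" "bilin_ext \<psi> f g - h \<in> N"
    using bilin_ext_span_G_closed[OF closed] by blast
  then have "quot_prod (coset N f) (coset N g) = coset N h"
    using f g by (simp add: quot_prod_coset coset_eq_iff)
  with h show "quot_prod (coset N f) (coset N g) \<in> quot"
    by blast
  fix h s
  assume h: "h \<in> free.span G"
  note simps = f g h f[THEN finite_support_span_G] g[THEN finite_support_span_G] h[THEN finite_support_span_G]
    coset_add_coset coset_scale_coset free.span_add free.span_scale quot_prod_coset
  show "quot_prod (coset_add (coset N f) (coset N g)) (coset N h) =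
      coset_add (quot_prod (coset N f) (coset N h)) (quot_prod (coset N g) (coset N h))"
    by (simp add: simps bilin_ext_add_left)
  show "quot_prod (coset N f) (coset_add (coset N g) (coset N h)) =
      coset_add (quot_prod (coset N f) (coset N g)) (quot_prod (coset N f) (coset N h))"
    by (simp add: simps bilin_ext_add_right)
  show "quot_prod (coset_scale N s (coset N f)) (coset N g) = coset_scale N s (quot_prod (coset N f) (coset N g))"
    by (simp add: simps bilin_ext_fscale_left)
  show "quot_prod (coset N f) (coset_scale N s (coset N g)) = coset_scale N s (quot_prod (coset N f) (coset N g))"
    by (simp add: simps bilin_ext_fscale_right)
qed

end

section \<open>Maps that are bilinear modulo the tensor relations\<close>

definition linear_wrt ::
  "('u \<Rightarrow> 'u \<Rightarrow> 'u) \<Rightarrow> ('k \<Rightarrow> 'u \<Rightarrow> 'u) \<Rightarrow> ('x \<Rightarrow> 'x \<Rightarrow> 'x) \<Rightarrow> ('k \<Rightarrow> 'x \<Rightarrow> 'x) \<Rightarrow> ('u \<Rightarrow> 'x) \<Rightarrow> bool"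
  where "linear_wrt addU scU addX scX L \<longleftrightarrow>
    (\<forall>u u'. L (addU u u') = addX (L u) (L u')) \<and> (\<forall>s u. L (scU s u) = scX s (L u))"

lemma bilinear_on_UNIV_linear_wrt:
  assumes "bilinear_on UNIV add scale m"
  shows "linear_wrt add scale add scale (\<lambda>u. m u w)" and "linear_wrt add scale add scale (m w)"
  using assms by (simp_all add: bilinear_on_def linear_wrt_def)

definition bilinear_mod ::
  "('u \<Rightarrow> 'u \<Rightarrow> 'u) \<Rightarrow> ('k::field \<Rightarrow> 'u \<Rightarrow> 'u) \<Rightarrow> ('v \<Rightarrow> 'v \<Rightarrow> 'v) \<Rightarrow> ('k \<Rightarrow> 'v \<Rightarrow> 'v) \<Rightarrow>
   ('y \<Rightarrow> 'k) set \<Rightarrow> ('u \<times> 'v \<Rightarrow> 'y \<Rightarrow> 'k) \<Rightarrow> bool"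
  where "bilinear_mod addU scU addV scV M \<phi> \<longleftrightarrow>
    (\<forall>u u' v. \<phi> (addU u u', v) - \<phi> (u, v) - \<phi> (u', v) \<in> M) \<and>
    (\<forall>u v v'. \<phi> (u, addV v v') - \<phi> (u, v) - \<phi> (u, v') \<in> M) \<and>
    (\<forall>s u v. \<phi> (scU s u, v) - fscale s (\<phi> (u, v)) \<in> M) \<and>
    (\<forall>s u v. \<phi> (u, scV s v) - fscale s (\<phi> (u, v)) \<in> M)"

lemma bilinear_mod_add:
  fixes M :: "('y \<Rightarrow> 'k::field) set"
  assumes M: "free.subspace M"
    and "bilinear_mod addU scU addV scV M \<phi>" and "bilinear_mod addU scU addV scV M \<chi>"
  shows "bilinear_mod addU scU addV scV M (\<lambda>z. \<phi> z + \<chi> z)"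
proof -
  have sum3: "(a + b) - (c + d) - (e + f) = (a - c - e) + (b - d - f)" for a b c d e f :: "'y \<Rightarrow> 'k"
    by (simp add: algebra_simps)
  have sum2: "(a + b) - fscale s (c + d) = (a - fscale s c) + (b - fscale s d)" for a b c d :: "'y \<Rightarrow> 'k" and s
    by (simp add: free.scale_right_distrib algebra_simps)
  show ?thesis
    using assms unfolding bilinear_mod_def sum3 sum2 by (simp add: free.subspace_add[OF M])
qed

lemma lin_ext_tensor_null:
  assumes M: "free.subspace M" and \<phi>: "bilinear_mod addU scU addV scV M \<phi>"
    and f: "f \<in> tensor_null addU scU addV scV"
  shows "lin_ext \<phi> f \<in> M"
proof (rule lin_ext_span_mem[OF M])
  show "f \<in> free.span (tensor_rels addU scU addV scV)"
    using f by (simp add: tensor_null_def)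
  fix r
  assume "r \<in> tensor_rels addU scU addV scV"
  then show "finite_support r \<and> lin_ext \<phi> r \<in> M"
    using \<phi> unfolding tensor_rels_def bilinear_mod_def
    by (auto simp: finite_support_diff finite_support_fscale lin_ext_diff lin_ext_fscale)
qed

lemma bilinear_mod_delta:
  assumes L: "linear_wrt addU scU addX scX L" and R: "linear_wrt addV scV addY scY R"
  shows "bilinear_mod addU scU addV scV (tensor_null addX scX addY scY) (\<lambda>(u, v). delta (L u, R v))"
proof -
  have rel: "r \<in> tensor_null addX scX addY scY" if "r \<in> tensor_rels addX scX addY scY" for r
    using that by (simp add: tensor_null_def free.span_base)
  show ?thesis
    using assms unfolding bilinear_mod_def linear_wrt_def
    by (auto intro!: rel) (unfold tensor_rels_def; blast)+
qed

section \<open>Augmented tridendriform algebras\<close>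

lemma bilinearD:
  fixes f :: "'a::ab_group_add \<Rightarrow> 'a \<Rightarrow> 'a"
  assumes "bilinear_on UNIV (+) scale f"
  shows "f (x + y) z = f x z + f y z" and "f x (y + z) = f x y + f x z"
    and "f (scale s x) y = scale s (f x y)" and "f x (scale s y) = scale s (f x y)"
    and "f 0 y = 0" and "f x 0 = 0"
proof -
  show add: "f (x + y) z = f x z + f y z" "f x (y + z) = f x y + f x z" for x y z
    using assms by (simp_all add: bilinear_on_def)
  show "f (scale s x) y = scale s (f x y)" "f x (scale s y) = scale s (f x y)"
    using assms by (simp_all add: bilinear_on_def)
  show "f 0 y = 0" "f x 0 = 0"
    using add(1)[of 0 0 y] add(2)[of x 0 0] by simp_all
qed

definition aug_mult :: "('k::field \<Rightarrow> 'a::ab_group_add \<Rightarrow> 'a) \<Rightarrow> ('a \<Rightarrow> 'a \<Rightarrow> 'a) \<Rightarrow> 'k \<times> 'a \<Rightarrow> 'k \<times> 'a \<Rightarrow> 'k \<times> 'a"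
  where "aug_mult scale m u v = (fst u * fst v, scale (fst u) (snd v) + scale (fst v) (snd u) + m (snd u) (snd v))"

lemma (in vector_space) bilinear_aug_mult:
  assumes "bilinear_on UNIV (+) scale m"
  shows "bilinear_on UNIV aug_add (aug_scale scale) (aug_mult scale m)"
  using bilinearD[OF assms]
  by (simp add: bilinear_on_def aug_mult_def aug_add_def aug_scale_def scale_left_distrib scale_right_distrib
      algebra_simps)

definition unital_mult :: "('a \<Rightarrow> 'a \<Rightarrow> 'a) \<Rightarrow> 'a option \<Rightarrow> 'a option \<Rightarrow> 'a option" where
  "unital_mult m x x' = (case (x, x') of
      (None, _) \<Rightarrow> x'
    | (_, None) \<Rightarrow> x
    | (Some a, Some c) \<Rightarrow> Some (m a c))"

lemma aug_star_eq_aug_emb: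
  "aug_star prec dot succ x x' = aug_emb (unital_mult (\<lambda>a c. prec a c + dot a c + succ a c) x x')"
  by (cases x; cases x') (simp_all add: aug_star_def aug_emb_def unital_mult_def)

lemma aug_emb_simps [simp]: "aug_emb None = (1, 0)" "aug_emb (Some a) = (0, a)"
  by (simp_all add: aug_emb_def)

lemma fst_aug_products:
  assumes "\<not> (y = None \<and> y' = None)"
  shows "fst (aug_prec prec y y') = 0" "fst (aug_dot dot y y') = 0" "fst (aug_succ succ y y') = 0"
  using assms by (cases y; cases y'; simp add: aug_prec_def aug_dot_def aug_succ_def)+

lemma snd_aug_star:
  "\<not> (y = None \<and> y' = None) \<Longrightarrow>
    snd (aug_star prec dot succ y y' :: 'k::field \<times> 'a::ab_group_add) =
      snd (aug_prec prec y y' :: 'k \<times> 'a) + snd (aug_dot dot y y' :: 'k \<times> 'a) + snd (aug_succ succ y y' :: 'k \<times> 'a)"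
  by (cases y; cases y') (simp_all add: aug_prec_def aug_dot_def aug_succ_def aug_star_def)

lemma (in vector_space) aug_mult_aug_emb:
  assumes "bilinear_on UNIV (+) scale (\<lambda>a c. prec a c + dot a c + succ a c)"
  shows "aug_mult scale (\<lambda>a c. prec a c + dot a c + succ a c) (aug_emb x) (aug_emb x') = aug_star prec dot succ x x'"
  using bilinearD(5,6)[OF assms]
  by (cases x; cases x') (simp_all add: aug_mult_def aug_emb_def aug_star_def)

lemma linear_wrt_aug_left:
  assumes "bilinear_on UNIV (+) scale m"
  shows "linear_wrt aug_add (aug_scale scale) aug_add (aug_scale scale) (\<lambda>u. (0, m (snd u) c))"
    and "linear_wrt aug_add (aug_scale scale) aug_add (aug_scale scale) (\<lambda>u. (0, m c (snd u)))"
  using bilinearD[OF assms] by (simp_all add: linear_wrt_def aug_add_def aug_scale_def)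

lemma (in vector_space) linear_wrt_aug_unit_coeff:
  "linear_wrt aug_add (aug_scale scale) aug_add (aug_scale scale) (\<lambda>v. (fst v * c, 0))"
  "linear_wrt aug_add (aug_scale scale) aug_add (aug_scale scale) (\<lambda>v. (c * fst v, 0))"
  by (simp_all add: linear_wrt_def aug_add_def aug_scale_def algebra_simps)

text \<open>Bilinear extensions of \<open>aug_prec\<close>, \<open>aug_dot\<close>, \<open>aug_succ\<close> to \<open>K1 \<oplus> A\<close>, with the undefined
  products \<open>1 \<prec> 1\<close>, \<open>1 \<cdot> 1\<close>, \<open>1 \<succ> 1\<close> set to 0.\<close>

definition aug_prec_bilin :: "('k::field \<Rightarrow> 'a::ab_group_add \<Rightarrow> 'a) \<Rightarrow> ('a \<Rightarrow> 'a \<Rightarrow> 'a) \<Rightarrow> 'k \<times> 'a \<Rightarrow> 'k \<times> 'a \<Rightarrow> 'k \<times> 'a"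
  where "aug_prec_bilin scale prec v v' = (0, scale (fst v') (snd v) + prec (snd v) (snd v'))"

definition aug_dot_bilin :: "('k::field \<Rightarrow> 'a::ab_group_add \<Rightarrow> 'a) \<Rightarrow> ('a \<Rightarrow> 'a \<Rightarrow> 'a) \<Rightarrow> 'k \<times> 'a \<Rightarrow> 'k \<times> 'a \<Rightarrow> 'k \<times> 'a"
  where "aug_dot_bilin scale dot v v' = (0, dot (snd v) (snd v'))"

definition aug_succ_bilin :: "('k::field \<Rightarrow> 'a::ab_group_add \<Rightarrow> 'a) \<Rightarrow> ('a \<Rightarrow> 'a \<Rightarrow> 'a) \<Rightarrow> 'k \<times> 'a \<Rightarrow> 'k \<times> 'a \<Rightarrow> 'k \<times> 'a"
  where "aug_succ_bilin scale succ v v' = (0, scale (fst v) (snd v') + succ (snd v) (snd v'))"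

locale tridendriform = vector_space scale
  for scale :: "'k::field \<Rightarrow> 'a::ab_group_add \<Rightarrow> 'a" +
  fixes prec dot succ :: "'a \<Rightarrow> 'a \<Rightarrow> 'a"
  assumes tridendriform: "tridendriform_on UNIV (+) scale prec dot succ"
begin

definition star :: "'a \<Rightarrow> 'a \<Rightarrow> 'a" where
  "star a b = prec a b + dot a b + succ a b"

lemma bilinear_prec: "bilinear_on UNIV (+) scale prec"
  and bilinear_dot: "bilinear_on UNIV (+) scale dot"
  and bilinear_succ: "bilinear_on UNIV (+) scale succ"
  using tridendriform by (simp_all add: tridendriform_on_def)

lemmas prec_bilinear = bilinearD[OF bilinear_prec]
  and dot_bilinear = bilinearD[OF bilinear_dot]
  and succ_bilinear = bilinearD[OF bilinear_succ]

lemma bilinear_star: "bilinear_on UNIV (+) scale star"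
  by (simp add: bilinear_on_def star_def prec_bilinear dot_bilinear succ_bilinear scale_right_distrib
      algebra_simps)

lemma star_0 [simp]: "star 0 c = 0" "star c 0 = 0"
  by (simp_all add: bilinearD[OF bilinear_star])

lemma prec_dot_succ_0 [simp]:
  "prec 0 c = 0" "prec c 0 = 0" "dot 0 c = 0" "dot c 0 = 0" "succ 0 c = 0" "succ c 0 = 0"
  by (simp_all add: prec_bilinear dot_bilinear succ_bilinear)

lemma tridend_identities [simp]:
  "prec (prec a b) c = prec a (star b c)"
  "prec (succ a b) c = succ a (prec b c)"
  "succ (star a b) c = succ a (succ b c)"
  "dot (succ a b) c = succ a (dot b c)"
  "dot (prec a b) c = dot a (succ b c)"
  "prec (dot a b) c = dot a (prec b c)"
  "dot (dot a b) c = dot a (dot b c)"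
  using tridendriform unfolding tridendriform_on_def tridend_axioms_on_def Let_def star_def by auto

lemma star_assoc [simp]: "star (star a b) c = star a (star b c)"
proof -
  have "prec (star a b) c = prec a (star b c) + dot a (prec b c) + succ a (prec b c)"
    and "dot (star a b) c = dot a (succ b c) + dot a (dot b c) + succ a (dot b c)"
    and "dot a (star b c) = dot a (prec b c) + dot a (dot b c) + dot a (succ b c)"
    and "succ a (star b c) = succ a (prec b c) + succ a (dot b c) + succ a (succ b c)"
    by (simp_all add: star_def prec_bilinear dot_bilinear succ_bilinear)
  then show ?thesis
    by (simp add: star_def[of "star a b" c] star_def[of a "star b c"] algebra_simps)
qed

lemma bilinear_aug_bilin:
  "bilinear_on UNIV aug_add (aug_scale scale) (aug_prec_bilin scale prec)"
  "bilinear_on UNIV aug_add (aug_scale scale) (aug_dot_bilin scale dot)"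
  "bilinear_on UNIV aug_add (aug_scale scale) (aug_succ_bilin scale succ)"
  by (simp_all add: bilinear_on_def aug_prec_bilin_def aug_dot_bilin_def aug_succ_bilin_def aug_add_def
      aug_scale_def prec_bilinear dot_bilinear succ_bilinear scale_left_distrib scale_right_distrib algebra_simps)

lemma aug_bilin_unit:
  "aug_prec_bilin scale prec (1, 0) (1, 0) = (0, 0)"
  "aug_dot_bilin scale dot (1, 0) (1, 0) = (0, 0)"
  "aug_succ_bilin scale succ (1, 0) (1, 0) = (0, 0)"
  by (simp_all add: aug_prec_bilin_def aug_dot_bilin_def aug_succ_bilin_def)

lemma aug_bilin_aug_emb:
  assumes "\<not> (y = None \<and> y' = None)"
  shows "aug_prec_bilin scale prec (aug_emb y) (aug_emb y') = aug_prec prec y y'"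
    and "aug_dot_bilin scale dot (aug_emb y) (aug_emb y') = aug_dot dot y y'"
    and "aug_succ_bilin scale succ (aug_emb y) (aug_emb y') = aug_succ succ y y'"
  using assms
  by (cases y; cases y'; simp add: aug_prec_bilin_def aug_dot_bilin_def aug_succ_bilin_def aug_emb_def
        aug_prec_def aug_dot_def aug_succ_def)+

lemma star_eq: "(\<lambda>a c. prec a c + dot a c + succ a c) = star"
  by (simp add: fun_eq_iff star_def)

lemma aug_star_eq: "aug_star prec dot succ x x' = aug_emb (unital_mult star x x')"
  by (simp add: aug_star_eq_aug_emb star_eq)

end

section \<open>The products on \<open>A \<otimes>bar B\<close>\<close>

text \<open>The second summand realises the rule
  \<open>(a \<otimes> 1) \<ltimes> (c \<otimes> 1) = (a \<ltimes> c) \<otimes> 1\<close>: its scalar is the coefficient of \<open>1 \<otimes> 1\<close> in \<open>v \<otimes> v'\<close>.\<close>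

definition pure_tensor_prod ::
  "('k \<times> 'a \<Rightarrow> 'k \<times> 'a \<Rightarrow> 'k \<times> 'a) \<Rightarrow> ('a \<Rightarrow> 'a \<Rightarrow> 'a::zero) \<Rightarrow> ('k \<times> 'b \<Rightarrow> 'k \<times> 'b \<Rightarrow> 'k \<times> 'b::zero) \<Rightarrow>
   ('k \<times> 'a) \<times> ('k \<times> 'b) \<Rightarrow> ('k \<times> 'a) \<times> ('k \<times> 'b) \<Rightarrow> ('k \<times> 'a) \<times> ('k \<times> 'b) \<Rightarrow> 'k::field"
  where "pure_tensor_prod mA oA mB z w =
    delta (mA (fst z) (fst w), mB (snd z) (snd w)) +
    delta ((0, oA (snd (fst z)) (snd (fst w))), (fst (snd z) * fst (snd w), 0))"

text \<open>Products of generators \<open>x \<otimes> y\<close> of \<open>A \<otimes>bar B\<close> are again generators; \<open>model_prod\<close> is the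
  resulting operation on the encodings \<open>(x, y)\<close> of the generators as pairs of options.\<close>

definition model_prod ::
  "('a \<Rightarrow> 'a \<Rightarrow> 'a) \<Rightarrow> ('a \<Rightarrow> 'a \<Rightarrow> 'a) \<Rightarrow> ('b option \<Rightarrow> 'b option \<Rightarrow> 'k \<times> 'b) \<Rightarrow>
   'a option \<times> 'b option \<Rightarrow> 'a option \<times> 'b option \<Rightarrow> 'a option \<times> 'b option"
  where "model_prod starA opA augopB X Y =
    (if snd X = None \<and> snd Y = None then (Some (opA (the (fst X)) (the (fst Y))), None)
     else (unital_mult starA (fst X) (fst Y), Some (snd (augopB (snd X) (snd Y)))))"

locale aug_tensor = A: vector_space scA + B: vector_space scB
  for scA :: "'k::field \<Rightarrow> 'a::ab_group_add \<Rightarrow> 'a" and scB :: "'k \<Rightarrow> 'b::ab_group_add \<Rightarrow> 'b"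
begin

abbreviation N :: "(('k \<times> 'a) \<times> ('k \<times> 'b) \<Rightarrow> 'k) set" where
  "N \<equiv> augT_null scA scB"

abbreviation gens :: "(('k \<times> 'a) \<times> ('k \<times> 'b) \<Rightarrow> 'k) set" where
  "gens \<equiv> {delta (aug_emb x, aug_emb y) | x y. \<not> (x = None \<and> y = None)}"

sublocale free_quotient N gens
proof
  show "free.subspace N"
    by (simp add: augT_null_def tensor_null_def)
  show "finite_support n" if "n \<in> N" for n
    using that unfolding augT_null_def tensor_null_def
    by (rule finite_support_span[rotated]) (auto simp: tensor_rels_def finite_support_diff finite_support_fscale)
qed auto

lemma tensor_bar_eq_quot: "tensor_bar scA scB = quot"
  by (simp add: tensor_bar_def)

lemma tensor_rel_in_N: "r \<in> tensor_rels aug_add (aug_scale scA) aug_add (aug_scale scB) \<Longrightarrow> r \<in> N"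
  by (simp add: augT_null_def tensor_null_def free.span_base)

lemma delta_zero_in_N: "delta (u, (0, 0)) \<in> N" "delta ((0, 0), v) \<in> N"
proof -
  have "delta (u, aug_scale scB 0 (0, 0)) - fscale 0 (delta (u, (0, 0))) \<in> N"
    and "delta (aug_scale scA 0 (0, 0), v) - fscale 0 (delta ((0, 0), v)) \<in> N"
    by (rule tensor_rel_in_N, unfold tensor_rels_def, blast)+
  then show "delta (u, (0, 0)) \<in> N" "delta ((0, 0), v) \<in> N"
    by (simp_all add: aug_scale_def)
qed

definition gen :: "'a option \<times> 'b option \<Rightarrow> (('k \<times> 'a) \<times> ('k \<times> 'b) \<Rightarrow> 'k) set" where
  "gen X = augT_tensor scA scB (aug_emb (fst X)) (aug_emb (snd X))"

lemma gen_in_coset_gens: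
  assumes "X \<noteq> (None, None)"
  shows "gen X \<in> coset N ` gens"
proof -
  obtain x y where X: "X = (x, y)"
    by (cases X)
  with assms have "delta (aug_emb x, aug_emb y) \<in> gens"
    by blast
  then show ?thesis
    unfolding X gen_def augT_tensor_def fst_conv snd_conv by (rule imageI)
qed

lemma tensor_bar_rule_value_eq_gen:
  assumes "\<And>y y'. \<not> (y = None \<and> y' = None) \<Longrightarrow> fst (augopB y y') = 0"
    and "\<not> (x = None \<and> y = None)" and "\<not> (x' = None \<and> y' = None)"
  shows "(if y = None \<and> y' = None then augT_tensor scA scB (0, opA (the x) (the x')) (1, 0)
      else augT_tensor scA scB (aug_star precA dotA succA x x') (augopB y y')) =
    gen (model_prod (\<lambda>a c. precA a c + dotA a c + succA a c) opA augopB (x, y) (x', y'))"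
proof (cases "y = None \<and> y' = None")
  case True
  then show ?thesis
    by (simp add: model_prod_def gen_def aug_emb_def)
next
  case False
  have "augopB y y' = aug_emb (Some (snd (augopB y y')))"
    using assms(1)[OF False] by (simp add: aug_emb_def prod_eq_iff)
  then show ?thesis
    unfolding model_prod_def fst_conv snd_conv if_not_P[OF False] gen_def by (simp add: aug_star_eq_aug_emb)
qed

context
  fixes mA :: "'k \<times> 'a \<Rightarrow> 'k \<times> 'a \<Rightarrow> 'k \<times> 'a" and oA :: "'a \<Rightarrow> 'a \<Rightarrow> 'a"
    and mB :: "'k \<times> 'b \<Rightarrow> 'k \<times> 'b \<Rightarrow> 'k \<times> 'b"
  assumes mA: "bilinear_on UNIV aug_add (aug_scale scA) mA"
    and oA: "bilinear_on UNIV (+) scA oA"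
    and mB: "bilinear_on UNIV aug_add (aug_scale scB) mB"
begin

lemma bilinear_mod_pure_tensor_prod:
  "bilinear_mod aug_add (aug_scale scA) aug_add (aug_scale scB) N (\<lambda>z. pure_tensor_prod mA oA mB z w)"
  "bilinear_mod aug_add (aug_scale scA) aug_add (aug_scale scB) N (pure_tensor_prod mA oA mB z)"
proof -
  have "(\<lambda>z. pure_tensor_prod mA oA mB z w) =
      (\<lambda>z. (\<lambda>(u, v). delta (mA u (fst w), mB v (snd w))) z +
        (\<lambda>(u, v). delta ((0, oA (snd u) (snd (fst w))), (fst v * fst (snd w), 0))) z)"
    by (auto simp: pure_tensor_prod_def fun_eq_iff)
  then show "bilinear_mod aug_add (aug_scale scA) aug_add (aug_scale scB) N (\<lambda>z. pure_tensor_prod mA oA mB z w)"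
    unfolding augT_null_def
    by (simp only:) (intro bilinear_mod_add[OF subspace_N[unfolded augT_null_def]] bilinear_mod_delta
        bilinear_on_UNIV_linear_wrt[OF mA] bilinear_on_UNIV_linear_wrt[OF mB] linear_wrt_aug_left[OF oA]
        B.linear_wrt_aug_unit_coeff)
  have "pure_tensor_prod mA oA mB z =
      (\<lambda>w. (\<lambda>(u', v'). delta (mA (fst z) u', mB (snd z) v')) w +
        (\<lambda>(u', v'). delta ((0, oA (snd (fst z)) (snd u')), (fst (snd z) * fst v', 0))) w)"
    by (auto simp: pure_tensor_prod_def fun_eq_iff)
  then show "bilinear_mod aug_add (aug_scale scA) aug_add (aug_scale scB) N (pure_tensor_prod mA oA mB z)"
    unfolding augT_null_def
    by (simp only:) (intro bilinear_mod_add[OF subspace_N[unfolded augT_null_def]] bilinear_mod_delta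
        bilinear_on_UNIV_linear_wrt[OF mA] bilinear_on_UNIV_linear_wrt[OF mB] linear_wrt_aug_left[OF oA]
        B.linear_wrt_aug_unit_coeff)
qed

lemma bilin_ext_pure_tensor_prod_N_left:
  assumes "f \<in> N" and "finite_support g"
  shows "bilin_ext (pure_tensor_prod mA oA mB) f g \<in> N"
proof -
  have "lin_ext (\<lambda>z. pure_tensor_prod mA oA mB z w) f \<in> N" for w
    by (rule lin_ext_tensor_null[OF subspace_N bilinear_mod_pure_tensor_prod(1)])
      (use assms(1) in \<open>simp add: augT_null_def\<close>)
  then show ?thesis
    using assms by (simp add: bilin_ext_swap finite_support_N lin_ext_in_subspace subspace_N)
qed

lemma bilin_ext_pure_tensor_prod_N_right:
  assumes "finite_support f" and "g \<in> N"
  shows "bilin_ext (pure_tensor_prod mA oA mB) f g \<in> N"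
proof -
  have "lin_ext (pure_tensor_prod mA oA mB z) g \<in> N" for z
    by (rule lin_ext_tensor_null[OF subspace_N bilinear_mod_pure_tensor_prod(2)])
      (use assms(2) in \<open>simp add: augT_null_def\<close>)
  then show ?thesis
    by (simp add: bilin_ext_def lin_ext_in_subspace subspace_N)
qed

end

context
  fixes precA dotA succA opA :: "'a \<Rightarrow> 'a \<Rightarrow> 'a"
    and mB :: "'k \<times> 'b \<Rightarrow> 'k \<times> 'b \<Rightarrow> 'k \<times> 'b" and augopB :: "'b option \<Rightarrow> 'b option \<Rightarrow> 'k \<times> 'b"
  assumes star: "bilinear_on UNIV (+) scA (\<lambda>a c. precA a c + dotA a c + succA a c)"
    and opA: "bilinear_on UNIV (+) scA opA"
    and mB: "bilinear_on UNIV aug_add (aug_scale scB) mB"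
    and mB_unit: "mB (1, 0) (1, 0) = (0, 0)"
    and mB_aug_emb: "\<And>y y'. \<not> (y = None \<and> y' = None) \<Longrightarrow> mB (aug_emb y) (aug_emb y') = augopB y y'"
    and augopB_unit_coeff: "\<And>y y'. \<not> (y = None \<and> y' = None) \<Longrightarrow> fst (augopB y y') = 0"
begin

abbreviation pure_prod :: "('k \<times> 'a) \<times> ('k \<times> 'b) \<Rightarrow> ('k \<times> 'a) \<times> ('k \<times> 'b) \<Rightarrow> ('k \<times> 'a) \<times> ('k \<times> 'b) \<Rightarrow> 'k"
  where "pure_prod \<equiv> pure_tensor_prod (aug_mult scA (\<lambda>a c. precA a c + dotA a c + succA a c)) opA mB"

lemma coset_pure_prod_aug_emb:
  assumes "\<not> (x = None \<and> y = None)" and "\<not> (x' = None \<and> y' = None)"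
  shows "coset N (pure_prod (aug_emb x, aug_emb y) (aug_emb x', aug_emb y')) =
    (if y = None \<and> y' = None then augT_tensor scA scB (0, opA (the x) (the x')) (1, 0)
     else augT_tensor scA scB (aug_star precA dotA succA x x') (augopB y y'))"
proof (cases "y = None \<and> y' = None")
  case True
  with assms obtain a a' where x: "x = Some a" "x' = Some a'"
    by auto
  have "pure_prod (aug_emb x, aug_emb y) (aug_emb x', aug_emb y') - delta ((0, opA a a'), (1, 0)) \<in> N"
    using True x delta_zero_in_N(1) by (simp add: pure_tensor_prod_def aug_emb_def mB_unit)
  then show ?thesis
    unfolding if_P[OF True] augT_tensor_def x option.sel by (simp add: coset_eq_iff)
next
  case False
  have unit_coeff: "(fst (aug_emb y :: 'k \<times> 'b) * fst (aug_emb y' :: 'k \<times> 'b), 0::'b) = (0, 0)"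
    using False by (auto simp: aug_emb_def split: option.split)
  have "pure_prod (aug_emb x, aug_emb y) (aug_emb x', aug_emb y') -
      delta (aug_star precA dotA succA x x', augopB y y') \<in> N"
    using delta_zero_in_N(1)
    by (simp add: unit_coeff pure_tensor_prod_def A.aug_mult_aug_emb[OF star] mB_aug_emb[OF False])
  then show ?thesis
    unfolding if_not_P[OF False] augT_tensor_def by (simp add: coset_eq_iff)
qed

lemma pure_prod_gens_closed:
  assumes b: "b \<in> gens" and b': "b' \<in> gens"
  shows "\<exists>h\<in>free.span gens. bilin_ext pure_prod b b' - h \<in> N"
proof -
  obtain x y where b: "b = delta (aug_emb x, aug_emb y)" and xy: "\<not> (x = None \<and> y = None)"
    using b by auto
  obtain x' y' where b': "b' = delta (aug_emb x', aug_emb y')" and xy': "\<not> (x' = None \<and> y' = None)"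
    using b' by auto
  let ?Z = "model_prod (\<lambda>a c. precA a c + dotA a c + succA a c) opA augopB (x, y) (x', y')"
  have "?Z \<noteq> (None, None)"
    by (simp add: model_prod_def)
  then obtain h where h: "h \<in> gens" "gen ?Z = coset N h"
    using gen_in_coset_gens by blast
  have "coset N (bilin_ext pure_prod b b') = gen ?Z"
    unfolding b b' bilin_ext_delta coset_pure_prod_aug_emb[OF xy xy']
    by (rule tensor_bar_rule_value_eq_gen[OF augopB_unit_coeff xy xy'])
  with h(2) have "bilin_ext pure_prod b b' - h \<in> N"
    by (simp add: coset_eq_iff)
  then show ?thesis
    by (rule bexI[OF _ free.span_base[OF h(1)]])
qed

lemma tensor_bar_product_exists:
  "\<exists>p. bilinear_on (tensor_bar scA scB) coset_add (coset_scale N) p \<and>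
     tensor_bar_rule scA scB precA dotA succA opA augopB p"
proof -
  have mA: "bilinear_on UNIV aug_add (aug_scale scA) (aug_mult scA (\<lambda>a c. precA a c + dotA a c + succA a c))"
    by (rule A.bilinear_aug_mult[OF star])
  interpret Q: quot_bilinear N gens pure_prod
    by unfold_locales
      (rule bilin_ext_pure_tensor_prod_N_left[OF mA opA mB] bilin_ext_pure_tensor_prod_N_right[OF mA opA mB];
        assumption)+
  have "bilinear_on (tensor_bar scA scB) coset_add (coset_scale N) Q.quot_prod"
    unfolding tensor_bar_eq_quot by (rule Q.bilinear_on_quot_prod[OF pure_prod_gens_closed])
  moreover have "tensor_bar_rule scA scB precA dotA succA opA augopB Q.quot_prod"
    unfolding tensor_bar_rule_def
  proof (intro allI impI)
    fix x x' :: "'a option" and y y' :: "'b option"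
    assume xy: "\<not> (x = None \<and> y = None)" and xy': "\<not> (x' = None \<and> y' = None)"
    then have "delta (aug_emb x, aug_emb y) \<in> free.span gens" "delta (aug_emb x', aug_emb y') \<in> free.span gens"
      by (blast intro: free.span_base)+
    then have "Q.quot_prod (augT_tensor scA scB (aug_emb x) (aug_emb y))
        (augT_tensor scA scB (aug_emb x') (aug_emb y')) =
      coset N (pure_prod (aug_emb x, aug_emb y) (aug_emb x', aug_emb y'))"
      unfolding augT_tensor_def by (simp only: Q.quot_prod_coset bilin_ext_delta)
    then show "Q.quot_prod (augT_tensor scA scB (aug_emb x) (aug_emb y))
        (augT_tensor scA scB (aug_emb x') (aug_emb y')) =
       (if y = None \<and> y' = None then augT_tensor scA scB (0, opA (the x) (the x')) (1, 0)
        else augT_tensor scA scB (aug_star precA dotA succA x x') (augopB y y'))"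
      by (simp only: coset_pure_prod_aug_emb[OF xy xy'])
  qed
  ultimately show ?thesis
    by blast
qed

end

end

section \<open>The tridendriform axioms on \<open>A \<otimes>bar B\<close>\<close>

lemma model_prod_nonunit: "model_prod starA opA augopB X Y \<noteq> (None, None)"
  by (simp add: model_prod_def)

text \<open>Generators with a zero factor vanish, so the model identities below only hold modulo
  \<open>zero_collapse\<close>; e.g. \<open>(a \<otimes> 1) \<prec> (1 \<otimes> b) = a \<otimes> 0\<close>.\<close>

definition zero_collapse :: "'a::zero option \<times> 'b::zero option \<Rightarrow> 'a option \<times> 'b option" where
  "zero_collapse X = (if fst X = Some 0 \<or> snd X = Some 0 then (Some 0, Some 0) else X)"

context aug_tensor
begin

lemma augT_tensor_add_left:
  "coset_add (augT_tensor scA scB u v) (augT_tensor scA scB u' v) = augT_tensor scA scB (aug_add u u') v"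
proof -
  have "delta (aug_add u u', v) - delta (u, v) - delta (u', v) \<in> N"
    by (rule tensor_rel_in_N) (unfold tensor_rels_def, blast)
  then have "- (delta (aug_add u u', v) - delta (u, v) - delta (u', v)) \<in> N"
    by (rule free.subspace_neg[OF subspace_N])
  then show ?thesis
    unfolding augT_tensor_def coset_add_coset coset_eq_iff by (simp add: algebra_simps)
qed

lemma augT_tensor_add_right:
  "coset_add (augT_tensor scA scB u v) (augT_tensor scA scB u v') = augT_tensor scA scB u (aug_add v v')"
proof -
  have "delta (u, aug_add v v') - delta (u, v) - delta (u, v') \<in> N"
    by (rule tensor_rel_in_N) (unfold tensor_rels_def, blast)
  then have "- (delta (u, aug_add v v') - delta (u, v) - delta (u, v')) \<in> N"
    by (rule free.subspace_neg[OF subspace_N])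
  then show ?thesis
    unfolding augT_tensor_def coset_add_coset coset_eq_iff by (simp add: algebra_simps)
qed

definition computes_on_gens ::
  "((('k \<times> 'a) \<times> ('k \<times> 'b) \<Rightarrow> 'k) set \<Rightarrow> (('k \<times> 'a) \<times> ('k \<times> 'b) \<Rightarrow> 'k) set \<Rightarrow> (('k \<times> 'a) \<times> ('k \<times> 'b) \<Rightarrow> 'k) set) \<Rightarrow>
   ('a option \<times> 'b option \<Rightarrow> 'a option \<times> 'b option \<Rightarrow> 'a option \<times> 'b option) \<Rightarrow> bool"
  where "computes_on_gens q m \<longleftrightarrow> (\<forall>X Y. X \<noteq> (None, None) \<longrightarrow> Y \<noteq> (None, None) \<longrightarrow> q (gen X) (gen Y) = gen (m X Y))"

lemma computes_on_gensD:
  assumes "computes_on_gens q m" and "X \<noteq> (None, None)" and "Y \<noteq> (None, None)"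
  shows "q (gen X) (gen Y) = gen (m X Y)"
  using assms(1)[unfolded computes_on_gens_def, rule_format, OF assms(2,3)] .

lemma gen_zero_collapse: "gen (zero_collapse X) = gen X"
proof (cases "fst X = Some 0 \<or> snd X = Some 0")
  case True
  have "aug_emb (fst X) = (0::'k, 0::'a) \<or> aug_emb (snd X) = (0::'k, 0::'b)"
    using True by auto
  then have "delta (aug_emb (fst X), aug_emb (snd X)) \<in> N"
    by (metis delta_zero_in_N)
  then have "gen X = coset N 0" "gen (Some 0, Some 0) = coset N 0"
    using delta_zero_in_N(1) unfolding gen_def augT_tensor_def by (simp_all add: coset_eq_iff)
  then show ?thesis
    by (simp add: zero_collapse_def True)
qed (simp add: zero_collapse_def)

lemma gens_coset_eq_gen: "b \<in> gens \<Longrightarrow> \<exists>X. X \<noteq> (None, None) \<and> coset N b = gen X"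
  by (auto simp: gen_def augT_tensor_def)

lemma gen_add_fst: "coset_add (gen (Some a, y)) (gen (Some a', y)) = gen (Some (a + a'), y)"
  by (simp add: gen_def augT_tensor_add_left aug_add_def aug_emb_def)

lemma gen_add_snd: "coset_add (gen (x, Some b)) (gen (x, Some b')) = gen (x, Some (b + b'))"
  by (simp add: gen_def augT_tensor_add_right aug_add_def aug_emb_def)

lemma tensor_bar_rule_computes_on_gens:
  assumes rule: "tensor_bar_rule scA scB precA dotA succA opA augopB p"
    and augopB_unit_coeff: "\<And>y y'. \<not> (y = None \<and> y' = None) \<Longrightarrow> fst (augopB y y') = 0"
  shows "computes_on_gens p (model_prod (\<lambda>a c. precA a c + dotA a c + succA a c) opA augopB)"
  unfolding computes_on_gens_def
proof (intro allI impI)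
  fix X Y :: "'a option \<times> 'b option"
  assume "X \<noteq> (None, None)" "Y \<noteq> (None, None)"
  moreover obtain x y x' y' where X: "X = (x, y)" and Y: "Y = (x', y')"
    by (cases X, cases Y)
  ultimately have xy: "\<not> (x = None \<and> y = None)" "\<not> (x' = None \<and> y' = None)"
    by auto
  have "p (gen X) (gen Y) = (if y = None \<and> y' = None then augT_tensor scA scB (0, opA (the x) (the x')) (1, 0)
      else augT_tensor scA scB (aug_star precA dotA succA x x') (augopB y y'))"
    unfolding X Y gen_def fst_conv snd_conv by (rule rule[unfolded tensor_bar_rule_def, rule_format, OF xy])
  also have "\<dots> = gen (model_prod (\<lambda>a c. precA a c + dotA a c + succA a c) opA augopB X Y)"
    unfolding X Y by (rule tensor_bar_rule_value_eq_gen[OF augopB_unit_coeff xy])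
  finally show "p (gen X) (gen Y) = gen (model_prod (\<lambda>a c. precA a c + dotA a c + succA a c) opA augopB X Y)" .
qed

lemma computes_on_gens_sum3:
  assumes "computes_on_gens p (model_prod starA precA (aug_prec precB :: _ \<Rightarrow> _ \<Rightarrow> 'k \<times> 'b))"
    and "computes_on_gens d (model_prod starA dotA (aug_dot dotB :: _ \<Rightarrow> _ \<Rightarrow> 'k \<times> 'b))"
    and "computes_on_gens s (model_prod starA succA (aug_succ succB :: _ \<Rightarrow> _ \<Rightarrow> 'k \<times> 'b))"
  shows "computes_on_gens (\<lambda>X Y. coset_add (coset_add (p X Y) (d X Y)) (s X Y))
    (model_prod starA (\<lambda>a c. precA a c + dotA a c + succA a c)
      (aug_star precB dotB succB :: _ \<Rightarrow> _ \<Rightarrow> 'k \<times> 'b))"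
  unfolding computes_on_gens_def
proof (intro allI impI)
  fix X Y :: "'a option \<times> 'b option"
  assume XY: "X \<noteq> (None, None)" "Y \<noteq> (None, None)"
  note pds = computes_on_gensD[OF assms(1) XY] computes_on_gensD[OF assms(2) XY]
    computes_on_gensD[OF assms(3) XY]
  show "coset_add (coset_add (p (gen X) (gen Y)) (d (gen X) (gen Y))) (s (gen X) (gen Y)) =
      gen (model_prod starA (\<lambda>a c. precA a c + dotA a c + succA a c)
      (aug_star precB dotB succB :: _ \<Rightarrow> _ \<Rightarrow> 'k \<times> 'b) X Y)"
  proof (cases "snd X = None \<and> snd Y = None")
    case True
    then show ?thesis
      unfolding pds model_prod_def if_P[OF True] by (simp add: gen_add_fst)
  next
    case False
    then show ?thesis
      unfolding pds model_prod_def if_not_P[OF False] by (simp add: gen_add_snd snd_aug_star[OF False])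
  qed
qed

lemma tensor_bar_identity_from_model:
  assumes q: "bilinear_on quot coset_add (coset_scale N) q" and mq: "computes_on_gens q mq"
    and r: "bilinear_on quot coset_add (coset_scale N) r" and mr: "computes_on_gens r mr"
    and q': "bilinear_on quot coset_add (coset_scale N) q'" and mq': "computes_on_gens q' mq'"
    and r': "bilinear_on quot coset_add (coset_scale N) r'" and mr': "computes_on_gens r' mr'"
    and mr_nonunit: "\<And>X Y. mr X Y \<noteq> (None, None)" and mr'_nonunit: "\<And>X Y. mr' X Y \<noteq> (None, None)"
    and model: "\<And>x1 y1 x2 y2 x3 y3. (x1, y1) \<noteq> (None, None) \<Longrightarrow> (x2, y2) \<noteq> (None, None) \<Longrightarrow>
      (x3, y3) \<noteq> (None, None) \<Longrightarrow>
      zero_collapse (mq (mr (x1, y1) (x2, y2)) (x3, y3)) = zero_collapse (mq' (x1, y1) (mr' (x2, y2) (x3, y3)))"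
    and "X \<in> quot" "Y \<in> quot" "Z \<in> quot"
  shows "q (r X Y) Z = q' X (r' Y Z)"
proof (rule trilinear_quot_eqI[OF q r q' r' _ \<open>X \<in> quot\<close> \<open>Y \<in> quot\<close> \<open>Z \<in> quot\<close>])
  fix b1 b2 b3
  assume "b1 \<in> gens" "b2 \<in> gens" "b3 \<in> gens"
  then obtain X1 X2 X3 where X: "X1 \<noteq> (None, None)" "X2 \<noteq> (None, None)" "X3 \<noteq> (None, None)"
    and b: "coset N b1 = gen X1" "coset N b2 = gen X2" "coset N b3 = gen X3"
    using gens_coset_eq_gen by meson
  have "q (r (gen X1) (gen X2)) (gen X3) = gen (zero_collapse (mq (mr X1 X2) X3))"
    by (simp add: computes_on_gensD[OF mr X(1,2)] computes_on_gensD[OF mq mr_nonunit X(3)] gen_zero_collapse)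
  also have "\<dots> = gen (zero_collapse (mq' X1 (mr' X2 X3)))"
    using model[of "fst X1" "snd X1" "fst X2" "snd X2" "fst X3" "snd X3"] X by simp
  also have "\<dots> = q' (gen X1) (r' (gen X2) (gen X3))"
    by (simp add: computes_on_gensD[OF mr' X(2,3)] computes_on_gensD[OF mq' X(1) mr'_nonunit] gen_zero_collapse)
  finally show "q (r (coset N b1) (coset N b2)) (coset N b3) = q' (coset N b1) (r' (coset N b2) (coset N b3))"
    unfolding b .
qed

end

locale tridendriform_pair = A: tridendriform scA precA dotA succA + B: tridendriform scB precB dotB succB
  for scA :: "'k::field \<Rightarrow> 'a::ab_group_add \<Rightarrow> 'a" and precA dotA succA
    and scB :: "'k \<Rightarrow> 'b::ab_group_add \<Rightarrow> 'b" and precB dotB succB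

sublocale tridendriform_pair \<subseteq> aug_tensor scA scB ..

context tridendriform_pair
begin

lemma tensor_bar_products_exist:
  "\<exists>p d s.
      bilinear_on (tensor_bar scA scB) coset_add (coset_scale N) p \<and>
      bilinear_on (tensor_bar scA scB) coset_add (coset_scale N) d \<and>
      bilinear_on (tensor_bar scA scB) coset_add (coset_scale N) s \<and>
      tensor_bar_rule scA scB precA dotA succA precA (aug_prec precB) p \<and>
      tensor_bar_rule scA scB precA dotA succA dotA (aug_dot dotB) d \<and>
      tensor_bar_rule scA scB precA dotA succA succA (aug_succ succB) s"
proof -
  note exists = tensor_bar_product_exists[OF A.bilinear_star[folded A.star_eq]]
  show ?thesis
    using exists[OF A.bilinear_prec B.bilinear_aug_bilin(1) B.aug_bilin_unit(1) B.aug_bilin_aug_emb(1)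
        fst_aug_products(1)]
      exists[OF A.bilinear_dot B.bilinear_aug_bilin(2) B.aug_bilin_unit(2) B.aug_bilin_aug_emb(2)
        fst_aug_products(2)]
      exists[OF A.bilinear_succ B.bilinear_aug_bilin(3) B.aug_bilin_unit(3) B.aug_bilin_aug_emb(3)
        fst_aug_products(3)]
    by blast
qed

definition "model_prec = model_prod A.star precA (aug_prec precB :: _ \<Rightarrow> _ \<Rightarrow> 'k \<times> 'b)"
definition "model_dot = model_prod A.star dotA (aug_dot dotB :: _ \<Rightarrow> _ \<Rightarrow> 'k \<times> 'b)"
definition "model_succ = model_prod A.star succA (aug_succ succB :: _ \<Rightarrow> _ \<Rightarrow> 'k \<times> 'b)"
definition "model_star = model_prod A.star A.star (aug_star precB dotB succB :: _ \<Rightarrow> _ \<Rightarrow> 'k \<times> 'b)"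

lemma model_identities:
  fixes x1 x2 x3 :: "'a option" and y1 y2 y3 :: "'b option"
  defines "X \<equiv> (x1, y1)" and "Y \<equiv> (x2, y2)" and "Z \<equiv> (x3, y3)"
  assumes "X \<noteq> (None, None)" and "Y \<noteq> (None, None)" and "Z \<noteq> (None, None)"
  shows "zero_collapse (model_prec (model_prec X Y) Z) = zero_collapse (model_prec X (model_star Y Z))"
    and "zero_collapse (model_prec (model_succ X Y) Z) = zero_collapse (model_succ X (model_prec Y Z))"
    and "zero_collapse (model_succ (model_star X Y) Z) = zero_collapse (model_succ X (model_succ Y Z))"
    and "zero_collapse (model_dot (model_succ X Y) Z) = zero_collapse (model_succ X (model_dot Y Z))"
    and "zero_collapse (model_dot (model_prec X Y) Z) = zero_collapse (model_dot X (model_succ Y Z))"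
    and "zero_collapse (model_prec (model_dot X Y) Z) = zero_collapse (model_dot X (model_prec Y Z))"
    and "zero_collapse (model_dot (model_dot X Y) Z) = zero_collapse (model_dot X (model_dot Y Z))"
  using assms(4-6) unfolding X_def Y_def Z_def
  by (cases x1; cases y1; cases x2; cases y2; cases x3; cases y3;
      simp add: model_prec_def model_dot_def model_succ_def model_star_def model_prod_def zero_collapse_def
        unital_mult_def aug_prec_def aug_dot_def aug_succ_def B.aug_star_eq)+

lemma model_nonunit:
  "model_prec X Y \<noteq> (None, None)" "model_dot X Y \<noteq> (None, None)"
  "model_succ X Y \<noteq> (None, None)" "model_star X Y \<noteq> (None, None)"
  by (simp_all add: model_prec_def model_dot_def model_succ_def model_star_def model_prod_nonunit)

lemma tensor_bar_rules_compute_on_gens: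
  assumes "tensor_bar_rule scA scB precA dotA succA precA (aug_prec precB) p"
    and "tensor_bar_rule scA scB precA dotA succA dotA (aug_dot dotB) d"
    and "tensor_bar_rule scA scB precA dotA succA succA (aug_succ succB) s"
  shows "computes_on_gens p model_prec" and "computes_on_gens d model_dot" and "computes_on_gens s model_succ"
    and "computes_on_gens (\<lambda>X Y. coset_add (coset_add (p X Y) (d X Y)) (s X Y)) model_star"
proof -
  show p: "computes_on_gens p model_prec"
    using tensor_bar_rule_computes_on_gens[OF assms(1) fst_aug_products(1)] by (simp add: model_prec_def A.star_eq)
  show d: "computes_on_gens d model_dot"
    using tensor_bar_rule_computes_on_gens[OF assms(2) fst_aug_products(2)] by (simp add: model_dot_def A.star_eq)
  show s: "computes_on_gens s model_succ"
    using tensor_bar_rule_computes_on_gens[OF assms(3) fst_aug_products(3)] by (simp add: model_succ_def A.star_eq)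
  show "computes_on_gens (\<lambda>X Y. coset_add (coset_add (p X Y) (d X Y)) (s X Y)) model_star"
    using computes_on_gens_sum3[OF p[unfolded model_prec_def] d[unfolded model_dot_def] s[unfolded model_succ_def]]
    by (simp add: model_star_def A.star_eq)
qed

lemma tridendriform_on_tensor_bar:
  assumes "bilinear_on (tensor_bar scA scB) coset_add (coset_scale N) p"
    and "bilinear_on (tensor_bar scA scB) coset_add (coset_scale N) d"
    and "bilinear_on (tensor_bar scA scB) coset_add (coset_scale N) s"
    and "tensor_bar_rule scA scB precA dotA succA precA (aug_prec precB) p"
    and "tensor_bar_rule scA scB precA dotA succA dotA (aug_dot dotB) d"
    and "tensor_bar_rule scA scB precA dotA succA succA (aug_succ succB) s"
  shows "tridendriform_on (tensor_bar scA scB) coset_add (coset_scale N) p d s"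
proof -
  define st where "st X Y = coset_add (coset_add (p X Y) (d X Y)) (s X Y)" for X Y
  have p: "bilinear_on quot coset_add (coset_scale N) p"
    and d: "bilinear_on quot coset_add (coset_scale N) d"
    and s: "bilinear_on quot coset_add (coset_scale N) s"
    using assms(1-3) by (simp_all add: tensor_bar_eq_quot)
  have st: "bilinear_on quot coset_add (coset_scale N) st"
    unfolding st_def by (rule bilinear_on_quot_sum3[OF p d s])
  note mp = tensor_bar_rules_compute_on_gens(1)[OF assms(4-6)]
    and md = tensor_bar_rules_compute_on_gens(2)[OF assms(4-6)]
    and ms = tensor_bar_rules_compute_on_gens(3)[OF assms(4-6)]
    and mst = tensor_bar_rules_compute_on_gens(4)[OF assms(4-6), folded st_def]
  have "p (p X Y) Z = p X (st Y Z)" "p (s X Y) Z = s X (p Y Z)" "s (st X Y) Z = s X (s Y Z)"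
    "d (s X Y) Z = s X (d Y Z)" "d (p X Y) Z = d X (s Y Z)" "p (d X Y) Z = d X (p Y Z)"
    "d (d X Y) Z = d X (d Y Z)"
    if "X \<in> quot" "Y \<in> quot" "Z \<in> quot" for X Y Z
    using tensor_bar_identity_from_model[OF p mp p mp p mp st mst model_nonunit(1,4) model_identities(1) that]
      tensor_bar_identity_from_model[OF p mp s ms s ms p mp model_nonunit(3,1) model_identities(2) that]
      tensor_bar_identity_from_model[OF s ms st mst s ms s ms model_nonunit(4,3) model_identities(3) that]
      tensor_bar_identity_from_model[OF d md s ms s ms d md model_nonunit(3,2) model_identities(4) that]
      tensor_bar_identity_from_model[OF d md p mp d md s ms model_nonunit(1,3) model_identities(5) that]
      tensor_bar_identity_from_model[OF p mp d md d md p mp model_nonunit(2,1) model_identities(6) that]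
      tensor_bar_identity_from_model[OF d md d md d md d md model_nonunit(2,2) model_identities(7) that]
    by simp_all
  with p d s show ?thesis
    unfolding tridendriform_on_def tridend_axioms_on_def Let_def tensor_bar_eq_quot st_def[symmetric]
    by simp
qed

end

theorem mainTheorem3:
  fixes scA :: "'k::field \<Rightarrow> 'a::ab_group_add \<Rightarrow> 'a"
    and scB :: "'k \<Rightarrow> 'b::ab_group_add \<Rightarrow> 'b"
    and precA dotA succA :: "'a \<Rightarrow> 'a \<Rightarrow> 'a"
    and precB dotB succB :: "'b \<Rightarrow> 'b \<Rightarrow> 'b"
  assumes "vector_space scA" and "vector_space scB"
    and "tridendriform_on UNIV (+) scA precA dotA succA"
    and "tridendriform_on UNIV (+) scB precB dotB succB"
  shows
    "(\<exists>p d s.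
        bilinear_on (tensor_bar scA scB) coset_add (coset_scale (augT_null scA scB)) p \<and>
        bilinear_on (tensor_bar scA scB) coset_add (coset_scale (augT_null scA scB)) d \<and>
        bilinear_on (tensor_bar scA scB) coset_add (coset_scale (augT_null scA scB)) s \<and>
        tensor_bar_rule scA scB precA dotA succA precA (aug_prec precB) p \<and>
        tensor_bar_rule scA scB precA dotA succA dotA (aug_dot dotB) d \<and>
        tensor_bar_rule scA scB precA dotA succA succA (aug_succ succB) s)
   \<and> (\<forall>p d s.
        bilinear_on (tensor_bar scA scB) coset_add (coset_scale (augT_null scA scB)) p \<and>
        bilinear_on (tensor_bar scA scB) coset_add (coset_scale (augT_null scA scB)) d \<and>
        bilinear_on (tensor_bar scA scB) coset_add (coset_scale (augT_null scA scB)) s \<and>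
        tensor_bar_rule scA scB precA dotA succA precA (aug_prec precB) p \<and>
        tensor_bar_rule scA scB precA dotA succA dotA (aug_dot dotB) d \<and>
        tensor_bar_rule scA scB precA dotA succA succA (aug_succ succB) s
        \<longrightarrow> tridendriform_on (tensor_bar scA scB) coset_add (coset_scale (augT_null scA scB)) p d s)"
proof -
  interpret tridendriform_pair scA precA dotA succA scB precB dotB succB
    using assms by (simp add: tridendriform_pair_def tridendriform_def tridendriform_axioms_def)
  show ?thesis
    using tensor_bar_products_exist tridendriform_on_tensor_bar by blast
qed

end
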